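(* Let $R>r>0$ and let $K^{-1/2}_0$ and $\{\mathbb{E}(t)\}_{t\in[-1/2,1/2]}$ be as in the context. Then $\{\mathbb{E}(t)\}_{t\in[-1/2,1/2]}$ is a resolution of the identity on $K^{-1/2}_0$; namely, $$\langle f,g\rangle_{-1/2}=\int_{-1/2}^{1/2}d\langle f,\mathbb{E}(t)g\rangle_{-1/2}\quad\text{for all } f,g\in K^{-1/2}_0.$$ Moreover, $\lim_{t\to s}\mathbb{E}(t)=\mathbb{E}(s)$ for all $s\in[-1/2,1/2]$ (strongly).
   Context: Identify $\mathbb{R}^2$ with $\mathbb{C}$; for $a\in\mathbb{R}\setminus\{0\}$ let $B_a$ be the open disk of radius $|a|$ centered at $(a,0)$. Fix $R>r>0$, let $\Omega=B_R\setminus\overline{B_r}$, and put $q=\frac1{2r}-\frac1{2R}>0$. For $k\neq0$ let $\mathbb{S}(k)=\frac{1}{2|k|}\mathrm{diag}(1-e^{-|k|q},\,1+e^{-|k|q})$. $K^{-1/2}_0$ is the Hilbert space of pairs $\hat\varphi=(\hat\varphi_1,\hat\varphi_2)^T$ of measurable complex functions on $\mathbb{R}$ (mod a.e.) with $\int_{\mathbb{R}}\hat\varphi^T\mathbb{S}\overline{\hat\varphi}\,dk<\infty$, inner product $\langle\psi,\varphi\rangle_{-1/2}=\int_{\mathbb{R}}\hat\psi^T\mathbb{S}\overline{\hat\varphi}\,dk$ (in the paper such a pair represents a boundary density on $\partial\Omega$ after pulling back by $z\mapsto1/z$, Fourier transforming, and applying $P=\frac1{\sqrt2}\begin{bmatrix}-1&1\\1&1\end{bmatrix}$).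 For $s\in\mathbb{R}\cup\{\infty\}$ let $\mathcal{P}^1(s)(\hat\varphi_1,\hat\varphi_2)=(\chi_{(-\infty,s]}\hat\varphi_1,0)$, $\mathcal{P}^2(s)(\hat\varphi_1,\hat\varphi_2)=(0,\chi_{(-\infty,s]}\hat\varphi_2)$ (with $\chi_{(-\infty,\infty]}\equiv1$), $\mathbb{I}=\mathcal{P}^1(\infty)+\mathcal{P}^2(\infty)$, and $$\mathbb{E}(t)=\begin{cases}\mathcal{P}^1\!\left(-\frac{\ln(-2t)}{q}\right)-\mathcal{P}^1\!\left(\frac{\ln(-2t)}{q}\right),& t\in[-1/2,0),\\[2pt]\mathcal{P}^2\!\left(\frac{\ln(2t)}{q}\right)-\mathcal{P}^2\!\left(-\frac{\ln(2t)}{q}\right)+\mathbb{I},& t\in(0,1/2],\end{cases}\qquad \mathbb{E}(0)=\lim_{t\to0^+}\mathbb{E}(t).$$ A resolution of the identity means: each $\mathbb{E}(t)$ is an orthogonal projection, $\mathbb{E}(t)\mathbb{E}(s)=\mathbb{E}(\min(t,s))$, $\mathbb{E}$ is right-continuous, $\mathbb{E}(-1/2)=0$, $\mathbb{E}(1/2)=\mathbb{I}$. *)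

theory Defs
  imports "HOL-Analysis.Analysis" "HOL-Library.Extended_Real"
begin

text \<open>Elements of K^{-1/2}_0 are represented by pairs of functions
  (phi1, phi2) : real -> complex; equality is up to Lebesgue-a.e. equality.\<close>

type_synonym kpair = "(real \<Rightarrow> complex) \<times> (real \<Rightarrow> complex)"

definition S1 :: "real \<Rightarrow> real \<Rightarrow> real" where
  "S1 q k = (1 - exp (- \<bar>k\<bar> * q)) / (2 * \<bar>k\<bar>)"

definition S2 :: "real \<Rightarrow> real \<Rightarrow> real" where
  "S2 q k = (1 + exp (- \<bar>k\<bar> * q)) / (2 * \<bar>k\<bar>)"

definition inK :: "real \<Rightarrow> kpair \<Rightarrow> bool" where
  "inK q \<phi> \<longleftrightarrow> fst \<phi> \<in> borel_measurable lborel \<and> snd \<phi> \<in> borel_measurable lborel \<and>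
     integrable lborel (\<lambda>k. S1 q k * (cmod (fst \<phi> k))\<^sup>2 + S2 q k * (cmod (snd \<phi> k))\<^sup>2)"

definition kinner :: "real \<Rightarrow> kpair \<Rightarrow> kpair \<Rightarrow> complex" where
  "kinner q \<psi> \<phi> = (LINT k|lborel. complex_of_real (S1 q k) * fst \<psi> k * cnj (fst \<phi> k)
                               + complex_of_real (S2 q k) * snd \<psi> k * cnj (snd \<phi> k))"

definition knorm :: "real \<Rightarrow> kpair \<Rightarrow> real" where
  "knorm q \<phi> = sqrt (Re (kinner q \<phi> \<phi>))"

definition keq :: "kpair \<Rightarrow> kpair \<Rightarrow> bool" where
  "keq \<phi> \<psi> \<longleftrightarrow> (AE k in lborel. fst \<phi> k = fst \<psi> k \<and> snd \<phi> k = snd \<psi> k)"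

definition kminus :: "kpair \<Rightarrow> kpair \<Rightarrow> kpair" where
  "kminus \<phi> \<psi> = ((\<lambda>k. fst \<phi> k - fst \<psi> k), (\<lambda>k. snd \<phi> k - snd \<psi> k))"

definition kplus :: "kpair \<Rightarrow> kpair \<Rightarrow> kpair" where
  "kplus \<phi> \<psi> = ((\<lambda>k. fst \<phi> k + fst \<psi> k), (\<lambda>k. snd \<phi> k + snd \<psi> k))"

definition kzero :: kpair where
  "kzero = ((\<lambda>k. 0), (\<lambda>k. 0))"

text \<open>P^1(s), P^2(s) for s in real \<union> {\<infinity>} (as an ereal; chi_{(-\<infinity>,\<infinity>]} = 1).\<close>
definition P1 :: "ereal \<Rightarrow> kpair \<Rightarrow> kpair" where
  "P1 s \<phi> = ((\<lambda>k. if ereal k \<le> s then fst \<phi> k else 0), (\<lambda>k. 0))"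

definition P2 :: "ereal \<Rightarrow> kpair \<Rightarrow> kpair" where
  "P2 s \<phi> = ((\<lambda>k. 0), (\<lambda>k. if ereal k \<le> s then snd \<phi> k else 0))"

definition Iop :: "kpair \<Rightarrow> kpair" where
  "Iop \<phi> = kplus (P1 \<infinity> \<phi>) (P2 \<infinity> \<phi>)"

text \<open>The family E(t); E(0) is the (pointwise, hence strong) limit t -> 0+, namely P^1(\<infinity>).\<close>
definition Eop :: "real \<Rightarrow> real \<Rightarrow> kpair \<Rightarrow> kpair" where
  "Eop q t \<phi> =
     (if t < 0 then kminus (P1 (ereal (- ln (-2*t) / q)) \<phi>) (P1 (ereal (ln (-2*t) / q)) \<phi>)
      else if t = 0 then P1 \<infinity> \<phi>
      else kplus (kminus (P2 (ereal (ln (2*t) / q)) \<phi>) (P2 (ereal (- ln (2*t) / q)) \<phi>)) (Iop \<phi>))"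

definition is_orth_proj :: "real \<Rightarrow> (kpair \<Rightarrow> kpair) \<Rightarrow> bool" where
  "is_orth_proj q P \<longleftrightarrow>
     (\<forall>\<phi>. inK q \<phi> \<longrightarrow> inK q (P \<phi>) \<and> keq (P (P \<phi>)) (P \<phi>)) \<and>
     (\<forall>\<phi> \<psi>. inK q \<phi> \<and> inK q \<psi> \<and> keq \<phi> \<psi> \<longrightarrow> keq (P \<phi>) (P \<psi>)) \<and>
     (\<forall>\<phi> \<psi>. inK q \<phi> \<and> inK q \<psi> \<longrightarrow> kinner q (P \<phi>) \<psi> = kinner q \<phi> (P \<psi>))"

end

theory Submission
  imports Defs "HOL-Real_Asymp.Real_Asymp"
begin

text \<open>E(t) is the spectral resolution of multiplication by diag(-exp(-q|k|)/2, exp(-q|k|)/2):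
  up to endpoints, it multiplies the two components by the indicators of the sets where these
  functions are at most t, namely the sets band1 q t and band2 q t below. The algebraic
  properties are therefore those of multiplication by indicators of sets increasing in t, and
  strong continuity at s is dominated convergence, since for k outside the null set
  {-band_radius q s, band_radius q s} these indicators are constant for t near s.\<close>

lemma S1_nonneg: "0 \<le> q \<Longrightarrow> 0 \<le> S1 q k"
  by (auto simp: S1_def intro!: divide_nonneg_nonneg)

lemma S2_nonneg: "0 \<le> S2 q k"
  by (auto simp: S2_def intro!: divide_nonneg_nonneg add_nonneg_nonneg)

lemma S1_measurable [measurable]: "S1 q \<in> borel_measurable borel"
  unfolding S1_def by measurable

lemma S2_measurable [measurable]: "S2 q \<in> borel_measurable borel"
  unfolding S2_def by measurable

definition kdensity :: "real \<Rightarrow> kpair \<Rightarrow> real \<Rightarrow> real" where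
  "kdensity q \<phi> k = S1 q k * (cmod (fst \<phi> k))\<^sup>2 + S2 q k * (cmod (snd \<phi> k))\<^sup>2"

lemma inK_iff_integrable_kdensity:
  "inK q \<phi> \<longleftrightarrow> fst \<phi> \<in> borel_measurable borel \<and> snd \<phi> \<in> borel_measurable borel \<and>
     integrable lborel (kdensity q \<phi>)"
  by (simp add: inK_def kdensity_def[abs_def])

lemma kdensity_nonneg: "0 \<le> q \<Longrightarrow> 0 \<le> kdensity q \<phi> k"
  by (simp add: kdensity_def S1_nonneg S2_nonneg)

lemma kdensity_measurable [measurable]:
  assumes "fst \<phi> \<in> borel_measurable borel" "snd \<phi> \<in> borel_measurable borel"
  shows "kdensity q \<phi> \<in> borel_measurable borel"
  unfolding kdensity_def[abs_def] using assms by measurable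

lemma Re_kinner_self: "Re (kinner q \<phi> \<phi>) = (LINT k|lborel. kdensity q \<phi> k)"
proof -
  have "kinner q \<phi> \<phi> = (LINT k|lborel. complex_of_real (kdensity q \<phi> k))"
    unfolding kinner_def kdensity_def
    by (intro Bochner_Integration.integral_cong refl)
       (simp add: mult.assoc complex_norm_square[symmetric])
  then show ?thesis by simp
qed

lemma keq_refl: "keq \<phi> \<phi>"
  by (simp add: keq_def)

lemma Iop_apply: "Iop \<phi> = \<phi>"
  by (simp add: Iop_def kplus_def P1_def P2_def)

lemma kinner_kzero_right: "kinner q \<psi> kzero = 0"
  by (simp add: kinner_def kzero_def)

definition kmask :: "real set \<Rightarrow> real set \<Rightarrow> kpair \<Rightarrow> kpair" where
  "kmask A B \<phi> = ((\<lambda>k. if k \<in> A then fst \<phi> k else 0), (\<lambda>k. if k \<in> B then snd \<phi> k else 0))"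

lemma kmask_kmask: "kmask A B (kmask A' B' \<phi>) = kmask (A \<inter> A') (B \<inter> B') \<phi>"
  by (auto simp: kmask_def)

lemma kmask_UNIV: "kmask UNIV UNIV \<phi> = \<phi>"
  by (auto simp: kmask_def)

lemma kmask_empty: "kmask {} {} \<phi> = kzero"
  by (simp add: kmask_def kzero_def)

lemma kmask_measurable:
  assumes "A \<in> sets borel" "B \<in> sets borel"
    and "fst \<phi> \<in> borel_measurable borel" "snd \<phi> \<in> borel_measurable borel"
  shows "fst (kmask A B \<phi>) \<in> borel_measurable borel" "snd (kmask A B \<phi>) \<in> borel_measurable borel"
  using assms by (simp_all add: kmask_def)

lemma kdensity_kmask_le: "0 \<le> q \<Longrightarrow> kdensity q (kmask A B \<phi>) k \<le> kdensity q \<phi> k"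
  by (simp add: kdensity_def kmask_def S1_nonneg S2_nonneg add_mono)

lemma inK_kmask:
  assumes "0 \<le> q" "A \<in> sets borel" "B \<in> sets borel" "inK q \<phi>"
  shows "inK q (kmask A B \<phi>)"
proof -
  have meas: "fst \<phi> \<in> borel_measurable borel" "snd \<phi> \<in> borel_measurable borel"
    and int: "integrable lborel (kdensity q \<phi>)"
    using assms(4) by (simp_all add: inK_iff_integrable_kdensity)
  have mask_meas:
    "fst (kmask A B \<phi>) \<in> borel_measurable borel" "snd (kmask A B \<phi>) \<in> borel_measurable borel"
    using assms(2,3) meas by (rule kmask_measurable)+
  have "integrable lborel (kdensity q (kmask A B \<phi>))"
  proof (rule Bochner_Integration.integrable_bound)
    show "AE k in lborel. norm (kdensity q (kmask A B \<phi>) k) \<le> norm (kdensity q \<phi> k)"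
      using assms(1) by (simp add: kdensity_nonneg kdensity_kmask_le)
    show "kdensity q (kmask A B \<phi>) \<in> borel_measurable lborel"
      using mask_meas by simp
  qed (rule int)
  with mask_meas show ?thesis
    by (simp add: inK_iff_integrable_kdensity)
qed

lemma kinner_kmask_commute: "kinner q (kmask A B \<phi>) \<psi> = kinner q \<phi> (kmask A B \<psi>)"
  unfolding kinner_def kmask_def by (intro Bochner_Integration.integral_cong) auto

lemma is_orth_proj_kmask:
  assumes "0 \<le> q" "A \<in> sets borel" "B \<in> sets borel"
  shows "is_orth_proj q (kmask A B)"
  unfolding is_orth_proj_def
proof (intro conjI allI impI)
  fix \<phi> \<psi> :: kpair
  show "inK q (kmask A B \<phi>)" if "inK q \<phi>"
    using assms that by (rule inK_kmask)
  show "keq (kmask A B (kmask A B \<phi>)) (kmask A B \<phi>)"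
    by (simp add: kmask_kmask keq_refl)
  show "keq (kmask A B \<phi>) (kmask A B \<psi>)" if "inK q \<phi> \<and> inK q \<psi> \<and> keq \<phi> \<psi>"
  proof -
    from that have "keq \<phi> \<psi>" by simp
    then show ?thesis
      unfolding keq_def kmask_def by (rule eventually_mono) simp
  qed
  show "kinner q (kmask A B \<phi>) \<psi> = kinner q \<phi> (kmask A B \<psi>)"
    by (rule kinner_kmask_commute)
qed

lemma kdensity_kminus_kmask:
  "kdensity q (kminus (kmask A B \<phi>) (kmask A' B' \<phi>)) k =
     (if k \<in> A \<longleftrightarrow> k \<in> A' then 0 else S1 q k * (cmod (fst \<phi> k))\<^sup>2) +
     (if k \<in> B \<longleftrightarrow> k \<in> B' then 0 else S2 q k * (cmod (snd \<phi> k))\<^sup>2)"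
  by (simp add: kdensity_def kminus_def kmask_def)

lemma kdensity_kminus_kmask_le:
  "0 \<le> q \<Longrightarrow> kdensity q (kminus (kmask A B \<phi>) (kmask A' B' \<phi>)) k \<le> kdensity q \<phi> k"
  unfolding kdensity_kminus_kmask by (simp add: kdensity_def S1_nonneg S2_nonneg add_mono)

lemma integral_dominated_convergence_at_within:
  fixes f :: "'a::first_countable_topology \<Rightarrow> 'b \<Rightarrow> 'c::{banach, second_countable_topology}"
  assumes "\<And>t. f t \<in> borel_measurable M" "g \<in> borel_measurable M" "integrable M w"
    and "\<And>t. AE x in M. norm (f t x) \<le> w x"
    and "AE x in M. ((\<lambda>t. f t x) \<longlongrightarrow> g x) (at s within S)"
  shows "((\<lambda>t. integral\<^sup>L M (f t)) \<longlongrightarrow> integral\<^sup>L M g) (at s within S)"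
  unfolding tendsto_at_iff_sequentially comp_def
proof (intro allI impI)
  fix X :: "nat \<Rightarrow> 'a"
  assume "\<forall>i. X i \<in> S - {s}" "X \<longlonglongrightarrow> s"
  then have X: "filterlim X (at s within S) sequentially"
    by (auto simp: filterlim_at)
  show "(\<lambda>i. integral\<^sup>L M (f (X i))) \<longlonglongrightarrow> integral\<^sup>L M g"
  proof (rule integral_dominated_convergence[where w = w])
    show "AE x in M. (\<lambda>i. f (X i) x) \<longlonglongrightarrow> g x"
      using assms(5) by eventually_elim (rule filterlim_compose[OF _ X])
  qed (use assms in auto)
qed

lemma tendsto_knorm_kminus_kmask:
  fixes A B :: "'a::first_countable_topology \<Rightarrow> real set"
  assumes "0 \<le> q" "inK q \<phi>" "\<And>t. A t \<in> sets borel" "\<And>t. B t \<in> sets borel"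
    and "AE k in lborel. \<forall>\<^sub>F t in at s within S. (k \<in> A t \<longleftrightarrow> k \<in> A s) \<and> (k \<in> B t \<longleftrightarrow> k \<in> B s)"
  shows "((\<lambda>t. knorm q (kminus (kmask (A t) (B t) \<phi>) (kmask (A s) (B s) \<phi>))) \<longlongrightarrow> 0)
           (at s within S)"
proof -
  have meas: "fst \<phi> \<in> borel_measurable borel" "snd \<phi> \<in> borel_measurable borel"
    and int: "integrable lborel (kdensity q \<phi>)"
    using assms(2) by (simp_all add: inK_iff_integrable_kdensity)
  have "((\<lambda>t. LINT k|lborel. kdensity q (kminus (kmask (A t) (B t) \<phi>) (kmask (A s) (B s) \<phi>)) k)
          \<longlongrightarrow> integral\<^sup>L lborel (\<lambda>k::real. 0::real)) (at s within S)"
  proof (rule integral_dominated_convergence_at_within[OF _ _ int])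
    show "AE k in lborel. norm (kdensity q (kminus (kmask (A t) (B t) \<phi>) (kmask (A s) (B s) \<phi>)) k)
            \<le> kdensity q \<phi> k" for t
      using assms(1) by (simp add: kdensity_nonneg kdensity_kminus_kmask_le)
    show "AE k in lborel.
            ((\<lambda>t. kdensity q (kminus (kmask (A t) (B t) \<phi>) (kmask (A s) (B s) \<phi>)) k) \<longlongrightarrow> 0)
            (at s within S)"
      using assms(5) by eventually_elim
        (auto simp: kdensity_kminus_kmask elim!: eventually_mono intro!: tendsto_eventually)
  qed (use meas int assms(3,4) in \<open>simp_all add: kdensity_kminus_kmask\<close>)
  from tendsto_real_sqrt[OF this] show ?thesis
    by (simp add: knorm_def Re_kinner_self)
qed

definition band_radius :: "real \<Rightarrow> real \<Rightarrow> real" where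
  "band_radius q t = - ln (2 * \<bar>t\<bar>) / q"

definition band1 :: "real \<Rightarrow> real \<Rightarrow> real set" where
  "band1 q t = {k. t < 0 \<longrightarrow> k \<in> {- band_radius q t<..band_radius q t}}"

definition band2 :: "real \<Rightarrow> real \<Rightarrow> real set" where
  "band2 q t = {k. 0 < t \<and> k \<notin> {- band_radius q t<..band_radius q t}}"

lemma band_radius_nonneg:
  assumes "0 < q" "\<bar>t\<bar> \<le> 1/2"
  shows "0 \<le> band_radius q t"
proof -
  have "ln (2 * \<bar>t\<bar>) \<le> 0"
    using assms(2) by (cases "t = 0") auto
  with assms(1) show ?thesis
    by (simp add: band_radius_def divide_nonpos_pos)
qed

lemma band1_measurable [measurable]: "band1 q t \<in> sets borel"
  unfolding band1_def by measurable

lemma band2_measurable [measurable]: "band2 q t \<in> sets borel"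
  unfolding band2_def by measurable

lemma Eop_eq_kmask:
  assumes "0 < q" "t \<in> {-1/2..1/2}"
  shows "Eop q t = kmask (band1 q t) (band2 q t)"
proof
  fix \<phi>
  have r: "0 \<le> band_radius q t"
    using assms by (intro band_radius_nonneg) auto
  consider "t < 0" | "t = 0" | "0 < t" by linarith
  then show "Eop q t \<phi> = kmask (band1 q t) (band2 q t) \<phi>"
  proof cases
    case 1
    then have "- ln (-2 * t) / q = band_radius q t" "ln (-2 * t) / q = - band_radius q t"
      by (simp_all add: band_radius_def)
    with 1 r show ?thesis
      by (auto simp: Eop_def kmask_def band1_def band2_def kminus_def P1_def)
  next
    case 2
    then show ?thesis
      by (simp add: Eop_def kmask_def band1_def band2_def P1_def)
  next
    case 3
    then have "- ln (2 * t) / q = band_radius q t" "ln (2 * t) / q = - band_radius q t"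
      by (simp_all add: band_radius_def)
    with 3 r show ?thesis
      by (auto simp: Eop_def kmask_def band1_def band2_def kminus_def kplus_def Iop_apply P2_def)
  qed
qed

lemma band_radius_antimono:
  "0 < q \<Longrightarrow> 0 < \<bar>t\<bar> \<Longrightarrow> \<bar>t\<bar> \<le> \<bar>s\<bar> \<Longrightarrow> band_radius q s \<le> band_radius q t"
  by (simp add: band_radius_def divide_right_mono)

lemma band1_mono: "0 < q \<Longrightarrow> t \<le> s \<Longrightarrow> band1 q t \<subseteq> band1 q s"
  using band_radius_antimono[of q s t] by (auto simp: band1_def)

lemma band2_mono: "0 < q \<Longrightarrow> t \<le> s \<Longrightarrow> band2 q t \<subseteq> band2 q s"
  using band_radius_antimono[of q t s] by (auto simp: band2_def)

lemma band1_min: "0 < q \<Longrightarrow> band1 q (min t s) = band1 q t \<inter> band1 q s"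
  using band1_mono[of q t s] band1_mono[of q s t] by (auto simp: min_def)

lemma band2_min: "0 < q \<Longrightarrow> band2 q (min t s) = band2 q t \<inter> band2 q s"
  using band2_mono[of q t s] band2_mono[of q s t] by (auto simp: min_def)

lemma bands_neg_half: "band1 q (-1/2) = {}" "band2 q (-1/2) = {}"
  by (auto simp: band1_def band2_def band_radius_def)

lemma bands_half: "band1 q (1/2) = UNIV" "band2 q (1/2) = UNIV"
  by (auto simp: band1_def band2_def band_radius_def)

lemma eventually_mem_interval_iff:
  fixes c :: "'a \<Rightarrow> real"
  assumes "(c \<longlongrightarrow> l) F" "\<bar>k\<bar> \<noteq> l"
  shows "\<forall>\<^sub>F x in F. k \<in> {- c x<..c x} \<longleftrightarrow> \<bar>k\<bar> < l"
proof (cases "\<bar>k\<bar> < l")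
  case True
  have "\<forall>\<^sub>F x in F. \<bar>k\<bar> < c x"
    using order_tendstoD(1)[OF assms(1) True] .
  then show ?thesis
    by eventually_elim (use True in auto)
next
  case False
  with assms(2) have "l < \<bar>k\<bar>" by simp
  then have "\<forall>\<^sub>F x in F. c x < \<bar>k\<bar>"
    using order_tendstoD(2)[OF assms(1)] by blast
  then show ?thesis
    by eventually_elim (use False in auto)
qed

lemma eventually_mem_interval:
  fixes c :: "'a \<Rightarrow> real"
  assumes "filterlim c at_top F"
  shows "\<forall>\<^sub>F x in F. k \<in> {- c x<..c x}"
proof -
  have "\<forall>\<^sub>F x in F. \<bar>k\<bar> < c x"
    using assms filterlim_at_top_dense by blast
  then show ?thesis
    by eventually_elim auto
qed

lemma eventually_band_mem:
  assumes "0 < q" "\<bar>k\<bar> \<noteq> band_radius q s"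
  shows "\<forall>\<^sub>F t in at s. (k \<in> band1 q t \<longleftrightarrow> k \<in> band1 q s) \<and> (k \<in> band2 q t \<longleftrightarrow> k \<in> band2 q s)"
proof (cases "s = 0")
  case True
  have "filterlim (band_radius q) at_top (at 0)"
    unfolding band_radius_def using assms(1) by real_asymp
  from eventually_mem_interval[OF this]
  have "\<forall>\<^sub>F t in at s. k \<in> {- band_radius q t<..band_radius q t}"
    using True by simp
  then show ?thesis
    by eventually_elim (auto simp: band1_def band2_def True)
next
  case False
  have "(band_radius q \<longlongrightarrow> band_radius q s) (at s)"
    unfolding band_radius_def using assms(1) False by (intro tendsto_intros) auto
  from eventually_mem_interval_iff[OF this assms(2)]
  have "\<forall>\<^sub>F t in at s. k \<in> {- band_radius q t<..band_radius q t} \<longleftrightarrow> \<bar>k\<bar> < band_radius q s" .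
  moreover have "\<forall>\<^sub>F t in at s. dist t s < \<bar>s\<bar>"
    using False by (intro tendstoD tendsto_ident_at) simp
  ultimately show ?thesis
    by eventually_elim (use assms(2) in \<open>auto simp: band1_def band2_def dist_real_def\<close>)
qed

lemma tendsto_knorm_Eop:
  assumes "0 < q" "s \<in> {-1/2..1/2}" "inK q \<phi>"
  shows "((\<lambda>t. knorm q (kminus (Eop q t \<phi>) (Eop q s \<phi>))) \<longlongrightarrow> 0) (at s within {-1/2..1/2})"
proof -
  have "AE k in lborel. \<forall>\<^sub>F t in at s within {-1/2..1/2}.
          (k \<in> band1 q t \<longleftrightarrow> k \<in> band1 q s) \<and> (k \<in> band2 q t \<longleftrightarrow> k \<in> band2 q s)"
    using AE_lborel_singleton[of "band_radius q s"] AE_lborel_singleton[of "- band_radius q s"]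
  proof eventually_elim
    case (elim k)
    then have "\<bar>k\<bar> \<noteq> band_radius q s" by auto
    with eventually_band_mem[OF assms(1)] show ?case
      by (blast intro: filter_leD[OF at_le[OF subset_UNIV]])
  qed
  with assms have lim: "((\<lambda>t. knorm q (kminus (kmask (band1 q t) (band2 q t) \<phi>)
                     (kmask (band1 q s) (band2 q s) \<phi>))) \<longlongrightarrow> 0) (at s within {-1/2..1/2})"
    by (intro tendsto_knorm_kminus_kmask) auto
  have "\<forall>\<^sub>F t in at s within {-1/2..1/2}.
          knorm q (kminus (kmask (band1 q t) (band2 q t) \<phi>) (kmask (band1 q s) (band2 q s) \<phi>))
          = knorm q (kminus (Eop q t \<phi>) (Eop q s \<phi>))"
    using assms(1,2) by (auto simp: eventually_at_filter Eop_eq_kmask)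
  from Lim_transform_eventually[OF lim this] show ?thesis .
qed

theorem proposition3p4:
  fixes r R :: real
  assumes "0 < r" and "r < R"
  defines "q \<equiv> 1 / (2 * r) - 1 / (2 * R)"
  shows
    "(\<forall>t\<in>{-1/2..1/2}. is_orth_proj q (Eop q t))
   \<and> (\<forall>t\<in>{-1/2..1/2}. \<forall>s\<in>{-1/2..1/2}. \<forall>\<phi>. inK q \<phi> \<longrightarrow>
        keq (Eop q t (Eop q s \<phi>)) (Eop q (min t s) \<phi>))
   \<and> (\<forall>\<phi>. inK q \<phi> \<longrightarrow> keq (Eop q (-1/2) \<phi>) kzero)
   \<and> (\<forall>\<phi>. inK q \<phi> \<longrightarrow> keq (Eop q (1/2) \<phi>) (Iop \<phi>))
   \<and> (\<forall>f g. inK q f \<and> inK q g \<longrightarrow>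
        kinner q f g = kinner q f (Eop q (1/2) g) - kinner q f (Eop q (-1/2) g))
   \<and> (\<forall>s\<in>{-1/2..1/2}. \<forall>\<phi>. inK q \<phi> \<longrightarrow>
        ((\<lambda>t. knorm q (kminus (Eop q t \<phi>) (Eop q s \<phi>))) \<longlongrightarrow> 0) (at s within {-1/2..1/2}))"
proof -
  have q: "0 < q"
    unfolding q_def using assms(1,2) by (simp add: field_simps)
  have ends: "Eop q (-1/2) \<phi> = kzero" "Eop q (1/2) \<phi> = \<phi>" for \<phi>
    using Eop_eq_kmask[OF q, of "-1/2"] Eop_eq_kmask[OF q, of "1/2"]
    unfolding bands_neg_half bands_half by (simp_all add: kmask_empty kmask_UNIV)
  have "is_orth_proj q (Eop q t)" if "t \<in> {-1/2..1/2}" for t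
    using q that by (simp add: Eop_eq_kmask is_orth_proj_kmask band1_measurable band2_measurable)
  moreover have "Eop q t (Eop q s \<phi>) = Eop q (min t s) \<phi>"
    if "t \<in> {-1/2..1/2}" "s \<in> {-1/2..1/2}" for t s \<phi>
  proof -
    from that have "min t s \<in> {-1/2..1/2}" by auto
    with q that show ?thesis
      by (simp add: Eop_eq_kmask[OF q] kmask_kmask band1_min band2_min)
  qed
  ultimately show ?thesis
    using tendsto_knorm_Eop[OF q] unfolding ends Iop_apply
    by (simp add: keq_refl kinner_kzero_right)
qed

end
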